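(* Min-Sum CMP can be solved in $\mathcal{O}(1)$ time for two robots.
   Context: Robots are axis-parallel unit squares in $\mathbb{R}^2$: a robot at position $p$ occupies $p+\boxdot$, $\boxdot=\{q:\|q\|_\infty\le 1/2\}$. Distances are measured in the $L_1$ norm $\|p\|=|x(p)|+|y(p)|$. A configuration of $k$ robots is a tuple $(p_1,\dots,p_k)$ with $\|p_i-p_j\|_\infty\ge 1$ for $i\ne j$; $\mathcal{F}_k$ is the set of configurations. A trajectory over $T=[t_0,t_1]$ is a $1$-Lipschitz (w.r.t. $L_1$) map $m:T\to\mathbb{R}^2$ whose image is a polygonal chain; a schedule is a tuple $M=(m_1,\dots,m_k)$ of trajectories over $T$, feasible if $M(t)\in\mathcal{F}_k$ for all $t\in T$; its total traveled length $\Sigma(M)$ is the sum of the lengths of the chains $m_i[T]$. Min-Sum CMP: given $A,B\in\mathcal{F}_k$, find the minimum total traveled length of a feasible schedule from $A$ to $B$ (and such a schedule). *)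

theory Defs
  imports "HOL-Analysis.Analysis"
begin

type_synonym pt = "real \<times> real"

definition l1 :: "pt \<Rightarrow> real" where
  "l1 p = \<bar>fst p\<bar> + \<bar>snd p\<bar>"

definition linf :: "pt \<Rightarrow> real" where
  "linf p = max \<bar>fst p\<bar> \<bar>snd p\<bar>"

definition config2 :: "pt \<times> pt \<Rightarrow> bool" where
  "config2 A \<longleftrightarrow> linf (fst A - snd A) \<ge> 1"

definition polygonal_chain :: "pt set \<Rightarrow> bool" where
  "polygonal_chain S \<longleftrightarrow> (\<exists>ps. ps \<noteq> [] \<and>
     S = insert (hd ps) (\<Union>i\<in>{..<length ps - 1}. closed_segment (ps ! i) (ps ! Suc i)))"

definition trajectory :: "real \<Rightarrow> real \<Rightarrow> (real \<Rightarrow> pt) \<Rightarrow> bool" where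
  "trajectory t0 t1 m \<longleftrightarrow> t0 \<le> t1 \<and>
     (\<forall>s\<in>{t0..t1}. \<forall>t\<in>{t0..t1}. l1 (m s - m t) \<le> \<bar>s - t\<bar>) \<and>
     polygonal_chain (m ` {t0..t1})"

definition path_len :: "real \<Rightarrow> real \<Rightarrow> (real \<Rightarrow> pt) \<Rightarrow> real" where
  "path_len t0 t1 m = Sup {(\<Sum>i<length ts - 1. l1 (m (ts ! Suc i) - m (ts ! i))) | ts.
      sorted ts \<and> set ts \<subseteq> {t0..t1}}"

definition feasible_schedule2 ::
  "pt \<times> pt \<Rightarrow> pt \<times> pt \<Rightarrow> real \<Rightarrow> real \<Rightarrow> (real \<Rightarrow> pt) \<Rightarrow> (real \<Rightarrow> pt) \<Rightarrow> bool" where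
  "feasible_schedule2 A B t0 t1 m1 m2 \<longleftrightarrow>
     trajectory t0 t1 m1 \<and> trajectory t0 t1 m2 \<and>
     (\<forall>t\<in>{t0..t1}. config2 (m1 t, m2 t)) \<and>
     m1 t0 = fst A \<and> m2 t0 = snd A \<and> m1 t1 = fst B \<and> m2 t1 = snd B"

definition total_len2 :: "real \<Rightarrow> real \<Rightarrow> (real \<Rightarrow> pt) \<Rightarrow> (real \<Rightarrow> pt) \<Rightarrow> real" where
  "total_len2 t0 t1 m1 m2 = path_len t0 t1 m1 + path_len t0 t1 m2"

definition minsum_opt2 :: "pt \<times> pt \<Rightarrow> pt \<times> pt \<Rightarrow> real" where
  "minsum_opt2 A B = Inf {total_len2 t0 t1 m1 m2 | t0 t1 m1 m2. feasible_schedule2 A B t0 t1 m1 m2}"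

section \<open>Real-RAM straight-line programs with branching (constant-size = O(1) time)\<close>

datatype rexp = Inp nat | Cst int | Add rexp rexp | Sub rexp rexp | Mul rexp rexp
  | Dv rexp rexp | Sqrt rexp | IfLe rexp rexp rexp rexp

primrec reval :: "real list \<Rightarrow> rexp \<Rightarrow> real" where
  "reval xs (Inp i) = xs ! i"
| "reval xs (Cst c) = of_int c"
| "reval xs (Add a b) = reval xs a + reval xs b"
| "reval xs (Sub a b) = reval xs a - reval xs b"
| "reval xs (Mul a b) = reval xs a * reval xs b"
| "reval xs (Dv a b) = reval xs a / reval xs b"
| "reval xs (Sqrt a) = sqrt (reval xs a)"
| "reval xs (IfLe a b c d) = (if reval xs a \<le> reval xs b then reval xs c else reval xs d)"

definition inst_input :: "pt \<times> pt \<Rightarrow> pt \<times> pt \<Rightarrow> real list" where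
  "inst_input A B = [fst (fst A), snd (fst A), fst (snd A), snd (snd A),
                     fst (fst B), snd (fst B), fst (snd B), snd (snd B)]"

fun pl_interp :: "(real \<times> 'v::real_vector) list \<Rightarrow> real \<Rightarrow> 'v" where
  "pl_interp [] t = 0"
| "pl_interp [(s, v)] t = v"
| "pl_interp ((s, v) # (s', v') # rest) t =
     (if t \<le> s' then v + ((t - s) / (s' - s)) *\<^sub>R (v' - v)
      else pl_interp ((s', v') # rest) t)"

definition run_waypoints ::
  "(rexp \<times> rexp \<times> rexp \<times> rexp \<times> rexp) list \<Rightarrow> real list \<Rightarrow> (real \<times> (pt \<times> pt)) list" where
  "run_waypoints W xs = map (\<lambda>(a, b, c, d, e).
      (reval xs a, ((reval xs b, reval xs c), (reval xs d, reval xs e)))) W"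

end

theory Submission
  imports Defs
begin

(*
  Every robot path is at least as long as any polygon inscribed in it, so a schedule from A to B
  costs at least the L1 length of the two straight moves. This bound is attained when the robots
  can first move along one axis, kept apart by their gap along the other axis, and then along the
  second axis. Otherwise neither the x-gap nor the y-gap of the robots keeps one sign of modulus at
  least 1 from A to B; by continuity there is a moment where the x-gap is below 1, so that the
  y-gap is at least 1, and another moment with the roles exchanged. A polygon inscribed through
  these two moments shows that on each axis the robots pay for a detour through a separated state,
  whose cheapest price has a closed form, and a plan of three axis-parallel moves pays exactly
  these prices. The optimal value and the waypoints of this plan are obtained from the input by
  additions, subtractions, products, absolute values, max, min and comparisons, that is, by a
  fixed straight-line program.
*)

section \<open>Path length\<close>

lemma l1_nonneg: "0 \<le> l1 p"
  by (simp add: l1_def)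

lemma l1_add_le: "l1 (p + q) \<le> l1 p + l1 q"
  by (simp add: l1_def abs_triangle_ineq add_mono)

lemma l1_minus_commute: "l1 (p - q) = l1 (q - p)"
  by (simp add: l1_def abs_minus_commute)

lemma l1_diff_le: "l1 (r - p) \<le> l1 (q - p) + l1 (r - q)"
  using l1_add_le[of "q - p" "r - q"] by simp

lemma l1_scaleR: "l1 (c *\<^sub>R p) = \<bar>c\<bar> * l1 p"
  by (simp add: l1_def abs_mult distrib_left)

lemma l1_swap_diff: "l1 (prod.swap p - prod.swap q) = l1 (p - q)"
  and l1_swap_diff_left: "l1 (prod.swap p - q) = l1 (p - prod.swap q)"
  by (cases p; cases q; simp add: l1_def add.commute)+

lemma norm_le_l1: "norm p \<le> l1 p"
  using norm_Pair_le[of "fst p" "snd p"] by (simp add: l1_def)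

text \<open>A length gauge \<open>\<phi>\<close> bounds the distance travelled between times \<open>s\<close> and \<open>t\<close> by
  \<open>\<phi> t - \<phi> s\<close>, which itself grows no faster than time; it certifies the path-length bound
  and the Lipschitz bound of a trajectory at once.\<close>
definition length_gauge :: "real \<Rightarrow> real \<Rightarrow> (real \<Rightarrow> real) \<Rightarrow> (real \<Rightarrow> pt) \<Rightarrow> bool" where
  "length_gauge a b \<phi> m \<longleftrightarrow> (\<forall>s t. a \<le> s \<longrightarrow> s \<le> t \<longrightarrow> t \<le> b \<longrightarrow>
     l1 (m t - m s) \<le> \<phi> t - \<phi> s \<and> \<phi> t - \<phi> s \<le> t - s)"

lemma length_gaugeD:
  assumes "length_gauge a b \<phi> m" "a \<le> s" "s \<le> t" "t \<le> b"
  shows "l1 (m t - m s) \<le> \<phi> t - \<phi> s" and "\<phi> t - \<phi> s \<le> t - s"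
  using assms unfolding length_gauge_def by auto

lemma length_gauge_join:
  assumes ab: "length_gauge a b \<phi> m" and bc: "length_gauge b c \<phi> m"
  shows "length_gauge a c \<phi> m"
  unfolding length_gauge_def
proof (intro allI impI)
  fix s t assume st: "a \<le> s" "s \<le> t" "t \<le> c"
  show "l1 (m t - m s) \<le> \<phi> t - \<phi> s \<and> \<phi> t - \<phi> s \<le> t - s"
  proof (cases "t \<le> b")
    case True
    then show ?thesis using length_gaugeD[OF ab] st by auto
  next
    case t: False
    show ?thesis
    proof (cases "b \<le> s")
      case True
      then show ?thesis using length_gaugeD[OF bc] st by auto
    next
      case False
      then have "l1 (m b - m s) \<le> \<phi> b - \<phi> s" "\<phi> b - \<phi> s \<le> b - s"
        "l1 (m t - m b) \<le> \<phi> t - \<phi> b" "\<phi> t - \<phi> b \<le> t - b"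
        using length_gaugeD[OF ab, of s b] length_gaugeD[OF bc, of b t] st t by auto
      then show ?thesis using l1_diff_le[of "m t" "m s" "m b"] by linarith
    qed
  qed
qed

lemma length_gauge_cong:
  assumes "length_gauge a b \<phi> m"
    and "\<And>t. a \<le> t \<Longrightarrow> t \<le> b \<Longrightarrow> \<phi>' t = \<phi> t"
    and "\<And>t. a \<le> t \<Longrightarrow> t \<le> b \<Longrightarrow> m' t = m t"
  shows "length_gauge a b \<phi>' m'"
  unfolding length_gauge_def
proof (intro allI impI)
  fix s t assume st: "a \<le> s" "s \<le> t" "t \<le> b"
  then have "\<phi>' s = \<phi> s" "\<phi>' t = \<phi> t" "m' s = m s" "m' t = m t"
    using assms(2,3) by auto
  then show "l1 (m' t - m' s) \<le> \<phi>' t - \<phi>' s \<and> \<phi>' t - \<phi>' s \<le> t - s"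
    using length_gaugeD[OF assms(1) st] by simp
qed

lemma length_gauge_segment:
  assumes ab: "a < b" and speed: "l1 (Q - P) \<le> b - a"
    and m: "\<And>t. a \<le> t \<Longrightarrow> t \<le> b \<Longrightarrow> m t = P + ((t - a) / (b - a)) *\<^sub>R (Q - P)"
    and \<phi>: "\<And>t. a \<le> t \<Longrightarrow> t \<le> b \<Longrightarrow> \<phi> t = c + ((t - a) / (b - a)) * l1 (Q - P)"
  shows "length_gauge a b \<phi> m"
  unfolding length_gauge_def
proof (intro allI impI)
  fix s t assume st: "a \<le> s" "s \<le> t" "t \<le> b"
  define u where "u = (t - s) / (b - a)"
  have u: "0 \<le> u" using st ab by (simp add: u_def)
  have "m t - m s = u *\<^sub>R (Q - P)"
    using m[of t] m[of s] st by (simp add: u_def diff_divide_distrib scaleR_diff_left)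
  moreover have "\<phi> t - \<phi> s = u * l1 (Q - P)"
    using \<phi>[of t] \<phi>[of s] st by (simp add: u_def diff_divide_distrib left_diff_distrib)
  moreover have "u * l1 (Q - P) \<le> u * (b - a)"
    using speed u by (rule mult_left_mono)
  moreover have "u * (b - a) = t - s"
    using ab by (simp add: u_def)
  ultimately show "l1 (m t - m s) \<le> \<phi> t - \<phi> s \<and> \<phi> t - \<phi> s \<le> t - s"
    using u by (simp add: l1_scaleR)
qed

lemma length_gauge_lipschitz:
  assumes "length_gauge a b \<phi> m" "s \<in> {a..b}" "t \<in> {a..b}"
  shows "l1 (m s - m t) \<le> \<bar>s - t\<bar>"
proof (cases "s \<le> t")
  case True
  then show ?thesis
    using length_gaugeD[OF assms(1), of s t] assms(2,3) by (simp add: l1_minus_commute)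
next
  case False
  then show ?thesis
    using length_gaugeD[OF assms(1), of t s] assms(2,3) by simp
qed

lemma trajectory_length_gauge:
  assumes "trajectory t0 t1 m"
  shows "length_gauge t0 t1 (\<lambda>t. t) m"
  unfolding length_gauge_def
proof (intro allI impI)
  fix s t assume st: "t0 \<le> s" "s \<le> t" "t \<le> t1"
  have "\<forall>s\<in>{t0..t1}. \<forall>t\<in>{t0..t1}. l1 (m s - m t) \<le> \<bar>s - t\<bar>"
    using assms by (simp add: trajectory_def)
  moreover have "t \<in> {t0..t1}" "s \<in> {t0..t1}"
    using st by auto
  ultimately have "l1 (m t - m s) \<le> \<bar>t - s\<bar>"
    by blast
  then show "l1 (m t - m s) \<le> t - s \<and> t - s \<le> t - s"
    using st by simp
qed

definition partition_len :: "(real \<Rightarrow> pt) \<Rightarrow> real list \<Rightarrow> real" where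
  "partition_len m ts = (\<Sum>i<length ts - 1. l1 (m (ts ! Suc i) - m (ts ! i)))"

lemma path_len_eq_Sup:
  "path_len a b m = Sup {partition_len m ts | ts. sorted ts \<and> set ts \<subseteq> {a..b}}"
  by (simp add: path_len_def partition_len_def)

lemma partition_len_le_gauge:
  assumes gauge: "length_gauge a b \<phi> m" and "a \<le> b" and "sorted ts" and ts: "set ts \<subseteq> {a..b}"
  shows "partition_len m ts \<le> \<phi> b - \<phi> a"
proof (cases "ts = []")
  case True
  then show ?thesis
    using length_gaugeD(1)[OF gauge, of a b] \<open>a \<le> b\<close> l1_nonneg[of "m b - m a"]
    by (simp add: partition_len_def)
next
  case False
  let ?n = "length ts - 1"
  have in_ab: "ts ! i \<in> {a..b}" if "i < length ts" for i
    using ts that nth_mem by blast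
  have "partition_len m ts \<le> (\<Sum>i<?n. \<phi> (ts ! Suc i) - \<phi> (ts ! i))"
    unfolding partition_len_def
  proof (rule sum_mono)
    fix i assume "i \<in> {..<?n}"
    then have i: "Suc i < length ts" by auto
    then have "ts ! i \<le> ts ! Suc i"
      using \<open>sorted ts\<close> by (simp add: sorted_iff_nth_mono)
    then show "l1 (m (ts ! Suc i) - m (ts ! i)) \<le> \<phi> (ts ! Suc i) - \<phi> (ts ! i)"
      using length_gaugeD(1)[OF gauge] in_ab[of i] in_ab[of "Suc i"] i by auto
  qed
  also have "\<dots> = \<phi> (ts ! ?n) - \<phi> (ts ! 0)"
    by (rule sum_lessThan_telescope)
  also have "\<dots> \<le> \<phi> b - \<phi> a"
    using length_gaugeD(1)[OF gauge, of "ts ! ?n" b] length_gaugeD(1)[OF gauge, of a "ts ! 0"]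
      in_ab[of ?n] in_ab[of 0] False l1_nonneg[of "m b - m (ts ! ?n)"] l1_nonneg[of "m (ts ! 0) - m a"]
    by fastforce
  finally show ?thesis .
qed

lemma path_len_le_gauge:
  assumes "length_gauge a b \<phi> m" "a \<le> b"
  shows "path_len a b m \<le> \<phi> b - \<phi> a"
  unfolding path_len_eq_Sup
proof (rule cSup_least)
  show "{partition_len m ts |ts. sorted ts \<and> set ts \<subseteq> {a..b}} \<noteq> {}"
    by (auto intro: exI[of _ "[]"])
qed (use partition_len_le_gauge[OF assms] in blast)

lemma partition_len_le_path_len:
  assumes "trajectory t0 t1 m" "sorted ts" "set ts \<subseteq> {t0..t1}"
  shows "partition_len m ts \<le> path_len t0 t1 m"
  unfolding path_len_eq_Sup
proof (rule cSup_upper)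
  have "t0 \<le> t1" using assms(1) by (simp add: trajectory_def)
  then show "bdd_above {partition_len m ts |ts. sorted ts \<and> set ts \<subseteq> {t0..t1}}"
    using partition_len_le_gauge[OF trajectory_length_gauge[OF assms(1)]]
    by (auto intro!: bdd_aboveI[where M = "t1 - t0"])
qed (use assms in blast)

lemma three_steps_le_path_len:
  assumes "trajectory t0 t1 m" "t0 \<le> p" "p \<le> q" "q \<le> t1"
  shows "l1 (m p - m t0) + l1 (m q - m p) + l1 (m t1 - m q) \<le> path_len t0 t1 m"
  using partition_len_le_path_len[OF assms(1), of "[t0, p, q, t1]"] assms
  by (simp add: partition_len_def numeral_3_eq_3)

lemma trajectory_continuous_on:
  assumes "trajectory t0 t1 m"
  shows "continuous_on {t0..t1} m"
proof (rule lipschitz_on_continuous_on)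
  show "1-lipschitz_on {t0..t1} m"
  proof (rule lipschitz_onI)
    fix s t assume "s \<in> {t0..t1}" "t \<in> {t0..t1}"
    then have "l1 (m s - m t) \<le> \<bar>s - t\<bar>"
      using assms by (simp add: trajectory_def)
    then show "dist (m s) (m t) \<le> 1 * dist s t"
      using norm_le_l1[of "m s - m t"] by (simp add: dist_norm)
  qed simp
qed

section \<open>Piecewise linear interpolation\<close>

lemma sorted_times_hd_le_last:
  fixes wl :: "(real \<times> 'v) list"
  shows "sorted_wrt (<) (map fst wl) \<Longrightarrow> wl \<noteq> [] \<Longrightarrow> fst (hd wl) \<le> fst (last wl)"
  by (induction wl rule: induct_list012) auto

lemma pl_interp_start:
  assumes "sorted_wrt (<) (map fst wl)" "wl \<noteq> []"
  shows "pl_interp wl (fst (hd wl)) = snd (hd wl)"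
  using assms by (induction wl rule: induct_list012) auto

lemma pl_interp_Cons_Cons_ge:
  assumes "sorted_wrt (<) (map fst ((s, v) # (s', v') # rest))" "s' \<le> t"
  shows "pl_interp ((s, v) # (s', v') # rest) t = pl_interp ((s', v') # rest) t"
proof (cases "t = s'")
  case True
  have "sorted_wrt (<) (map fst ((s', v') # rest))"
    using assms(1) by simp
  then show ?thesis
    using True assms pl_interp_start[of "(s', v') # rest"] by simp
qed (use assms in simp)

lemma pl_interp_last:
  assumes "sorted_wrt (<) (map fst wl)" "wl \<noteq> []"
  shows "pl_interp wl (fst (last wl)) = snd (last wl)"
  using assms
proof (induction wl rule: induct_list012)
  case (3 x y zs)
  then have "fst y \<le> fst (last (y # zs))"
    using sorted_times_hd_le_last[of "y # zs"] by simp
  then show ?case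
    using 3 pl_interp_Cons_Cons_ge[of "fst x" "snd x" "fst y" "snd y" zs] by simp
qed auto

lemma pl_interp_linear:
  assumes "linear f"
  shows "f (pl_interp wl t) = pl_interp (map (apsnd f) wl) t"
  by (induction wl t rule: pl_interp.induct)
    (simp_all add: linear_0[OF assms] linear_add[OF assms] linear_diff[OF assms] linear_scale[OF assms])

fun chain_segments :: "'v::real_vector list \<Rightarrow> 'v set" where
  "chain_segments (v # w # vs) = closed_segment v w \<union> chain_segments (w # vs)"
| "chain_segments _ = {}"

lemma chain_segments_eq_UN:
  "chain_segments ps = (\<Union>i<length ps - 1. closed_segment (ps ! i) (ps ! Suc i))"
  by (induction ps rule: chain_segments.induct) (simp_all add: lessThan_Suc_eq_insert_0)

lemma polygonal_chain_chain_segments: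
  "ps \<noteq> [] \<Longrightarrow> polygonal_chain (insert (hd ps) (chain_segments ps))"
  unfolding polygonal_chain_def chain_segments_eq_UN by blast

lemma linear_path_image:
  fixes P Q :: "'v::real_vector"
  assumes "a < b"
  shows "(\<lambda>t. P + ((t - a) / (b - a)) *\<^sub>R (Q - P)) ` {a..b} = closed_segment P Q"
proof -
  have unit: "(\<lambda>t. (t - a) / (b - a)) ` {a..b} = {0..1}"
  proof (intro equalityI subsetI)
    fix u :: real assume u: "u \<in> {0..1}"
    then have "0 \<le> u * (b - a)" "u * (b - a) \<le> b - a"
      using assms mult_right_mono[of u 1 "b - a"] by auto
    then have "a + u * (b - a) \<in> {a..b}"
      by simp
    moreover have "u = (a + u * (b - a) - a) / (b - a)"
      using assms by simp
    ultimately show "u \<in> (\<lambda>t. (t - a) / (b - a)) ` {a..b}"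
      by (rule rev_image_eqI)
  qed (use assms in \<open>auto simp: divide_simps\<close>)
  then show ?thesis
    unfolding closed_segment_image_interval by (simp flip: unit add: image_image algebra_simps)
qed

lemma pl_interp_image:
  assumes "sorted_wrt (<) (map fst wl)" "wl \<noteq> []"
  shows "pl_interp wl ` {fst (hd wl)..fst (last wl)} = insert (snd (hd wl)) (chain_segments (map snd wl))"
  using assms
proof (induction wl rule: induct_list012)
  case (3 x y zs)
  obtain s v s' v' where xy: "x = (s, v)" "y = (s', v')"
    by (metis surj_pair)
  let ?wl = "x # y # zs" and ?e = "fst (last (y # zs))"
  have "s < s'" "s' \<le> ?e"
    using 3 sorted_times_hd_le_last[of "y # zs"] xy by auto
  then have split: "{s..?e} = {s..s'} \<union> {s'..?e}"
    by auto
  have "pl_interp ?wl ` {s..s'} = (\<lambda>t. v + ((t - s) / (s' - s)) *\<^sub>R (v' - v)) ` {s..s'}"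
    using xy by (intro image_cong) auto
  also have "\<dots> = closed_segment v v'"
    using \<open>s < s'\<close> by (rule linear_path_image)
  finally have head: "pl_interp ?wl ` {s..s'} = closed_segment v v'" .
  have "pl_interp ?wl t = pl_interp (y # zs) t" if "s' \<le> t" for t
    unfolding xy using "3.prems"(1) xy that by (intro pl_interp_Cons_Cons_ge) auto
  then have "pl_interp ?wl ` {s'..?e} = pl_interp (y # zs) ` {s'..?e}"
    by (intro image_cong) auto
  also have "\<dots> = insert v' (chain_segments (map snd (y # zs)))"
    using 3 xy by simp
  finally have tail: "pl_interp ?wl ` {s'..?e} = insert v' (chain_segments (map snd (y # zs)))" .
  have "{fst (hd ?wl)..fst (last ?wl)} = {s..s'} \<union> {s'..?e}"
    using xy split by simp
  then have "pl_interp ?wl ` {fst (hd ?wl)..fst (last ?wl)} =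
      closed_segment v v' \<union> insert v' (chain_segments (map snd (y # zs)))"
    by (simp only: image_Un head tail)
  also have "\<dots> = insert (snd (hd ?wl)) (chain_segments (map snd ?wl))"
    using xy ends_in_segment[of v v'] by auto
  finally show ?case .
qed auto

fun pl_length :: "(real \<times> pt) list \<Rightarrow> real" where
  "pl_length ((s, v) # (s', v') # rest) = l1 (v' - v) + pl_length ((s', v') # rest)"
| "pl_length _ = 0"

fun unit_speed :: "(real \<times> pt) list \<Rightarrow> bool" where
  "unit_speed ((s, v) # (s', v') # rest) \<longleftrightarrow> l1 (v' - v) \<le> s' - s \<and> unit_speed ((s', v') # rest)"
| "unit_speed _ \<longleftrightarrow> True"

lemma pl_interp_length_gauge:
  assumes "sorted_wrt (<) (map fst wl)" "unit_speed wl" "wl \<noteq> []"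
  shows "\<exists>\<phi>. length_gauge (fst (hd wl)) (fst (last wl)) \<phi> (pl_interp wl) \<and>
    \<phi> (fst (last wl)) - \<phi> (fst (hd wl)) = pl_length wl"
  using assms
proof (induction wl rule: induct_list012)
  case (2 x)
  show ?case
    by (rule exI[of _ "\<lambda>_. 0"]) (cases x, auto simp: length_gauge_def l1_def)
next
  case (3 x y zs)
  obtain s v s' v' where xy: "x = (s, v)" "y = (s', v')"
    by (metis surj_pair)
  let ?wl = "x # y # zs" and ?e = "fst (last (y # zs))" and ?L = "l1 (v' - v)"
  obtain \<phi> where \<phi>: "length_gauge s' ?e \<phi> (pl_interp (y # zs))" "\<phi> ?e - \<phi> s' = pl_length (y # zs)"
    using 3 xy by auto
  have "s < s'" "s' \<le> ?e" "?L \<le> s' - s"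
    using 3 sorted_times_hd_le_last[of "y # zs"] xy by auto
  define \<psi> where "\<psi> t = (if t \<le> s' then \<phi> s' - ?L + ((t - s) / (s' - s)) * ?L else \<phi> t)" for t
  have "length_gauge s s' \<psi> (pl_interp ?wl)"
    using \<open>s < s'\<close> \<open>?L \<le> s' - s\<close> xy
    by (intro length_gauge_segment[where c = "\<phi> s' - ?L"]) (auto simp: \<psi>_def)
  moreover have "length_gauge s' ?e \<psi> (pl_interp ?wl)"
    using \<phi>(1)
  proof (rule length_gauge_cong)
    fix t assume "s' \<le> t"
    then show "\<psi> t = \<phi> t"
      using \<open>s < s'\<close> by (auto simp: \<psi>_def)
    show "pl_interp ?wl t = pl_interp (y # zs) t"
      unfolding xy using "3.prems"(1) xy \<open>s' \<le> t\<close> by (intro pl_interp_Cons_Cons_ge) auto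
  qed
  ultimately have "length_gauge s ?e \<psi> (pl_interp ?wl)"
    by (rule length_gauge_join)
  moreover have "\<psi> ?e - \<psi> s = pl_length ?wl"
    using \<phi>(2) \<open>s < s'\<close> \<open>s' \<le> ?e\<close> xy by (auto simp: \<psi>_def)
  moreover have "fst (hd ?wl) = s" "fst (last ?wl) = ?e"
    using xy by simp_all
  ultimately show ?case
    by metis
qed auto

lemma pl_interp_trajectory:
  assumes "sorted_wrt (<) (map fst wl)" "unit_speed wl" "wl \<noteq> []"
  shows "trajectory (fst (hd wl)) (fst (last wl)) (pl_interp wl)"
    and "path_len (fst (hd wl)) (fst (last wl)) (pl_interp wl) \<le> pl_length wl"
proof -
  obtain \<phi> where \<phi>: "length_gauge (fst (hd wl)) (fst (last wl)) \<phi> (pl_interp wl)"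
    "\<phi> (fst (last wl)) - \<phi> (fst (hd wl)) = pl_length wl"
    using pl_interp_length_gauge[OF assms] by blast
  have le: "fst (hd wl) \<le> fst (last wl)"
    using assms(1,3) by (rule sorted_times_hd_le_last)
  show "path_len (fst (hd wl)) (fst (last wl)) (pl_interp wl) \<le> pl_length wl"
    using path_len_le_gauge[OF \<phi>(1) le] \<phi>(2) by simp
  have "polygonal_chain (pl_interp wl ` {fst (hd wl)..fst (last wl)})"
    using polygonal_chain_chain_segments[of "map snd wl"] assms
    by (simp add: pl_interp_image hd_map)
  then show "trajectory (fst (hd wl)) (fst (last wl)) (pl_interp wl)"
    using le length_gauge_lipschitz[OF \<phi>(1)] by (simp add: trajectory_def)
qed

section \<open>Schedules through a list of configurations\<close>

definition move_len :: "pt \<times> pt \<Rightarrow> pt \<times> pt \<Rightarrow> real" where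
  "move_len C D = l1 (fst D - fst C) + l1 (snd D - snd C)"

fun plan_len :: "(pt \<times> pt) list \<Rightarrow> real" where
  "plan_len (C # D # cs) = move_len C D + plan_len (D # cs)"
| "plan_len _ = 0"

text \<open>A move of length \<open>L\<close> is given the time \<open>1 + L\<close>: times increase strictly and
  each robot stays within unit speed.\<close>
fun timed_plan :: "real \<Rightarrow> (pt \<times> pt) list \<Rightarrow> (real \<times> (pt \<times> pt)) list" where
  "timed_plan t (C # D # cs) = (t, C) # timed_plan (t + 1 + move_len C D) (D # cs)"
| "timed_plan t cs = map (Pair t) cs"

lemma move_len_nonneg: "0 \<le> move_len C D"
  using l1_nonneg[of "fst D - fst C"] l1_nonneg[of "snd D - snd C"] by (simp add: move_len_def)

lemma timed_plan_Cons: "\<exists>ws. timed_plan t (C # cs) = (t, C) # ws"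
  by (cases cs) auto

lemma map_snd_timed_plan: "map snd (timed_plan t cs) = cs"
  by (induction t cs rule: timed_plan.induct) auto

lemma timed_plan_times_ge: "w \<in> set (timed_plan t cs) \<Longrightarrow> t \<le> fst w"
proof (induction t cs rule: timed_plan.induct)
  case (1 t C D cs)
  then show ?case
    using move_len_nonneg[of C D] by fastforce
qed auto

lemma timed_plan_sorted: "sorted_wrt (<) (map fst (timed_plan t cs))"
proof (induction t cs rule: timed_plan.induct)
  case (1 t C D cs)
  have "t < fst w" if "w \<in> set (timed_plan (t + 1 + move_len C D) (D # cs))" for w
    using timed_plan_times_ge[OF that] move_len_nonneg[of C D] by linarith
  with 1 show ?case
    by auto
qed (auto simp: sorted_wrt_map)

lemma timed_plan_unit_speed:
  assumes "\<And>C D. l1 (f D - f C) \<le> move_len C D"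
  shows "unit_speed (map (apsnd f) (timed_plan t cs))"
proof (induction t cs rule: timed_plan.induct)
  case (1 t C D cs)
  obtain ws where "timed_plan (t + 1 + move_len C D) (D # cs) = (t + 1 + move_len C D, D) # ws"
    using timed_plan_Cons by blast
  moreover have "l1 (f D - f C) \<le> move_len C D"
    by (rule assms)
  ultimately show ?case
    using 1 by simp
qed auto

lemma timed_plan_pl_length:
  "pl_length (map (apsnd fst) (timed_plan t cs)) + pl_length (map (apsnd snd) (timed_plan t cs)) =
    plan_len cs"
proof (induction t cs rule: timed_plan.induct)
  case (1 t C D cs)
  obtain ws where "timed_plan (t + 1 + move_len C D) (D # cs) = (t + 1 + move_len C D, D) # ws"
    using timed_plan_Cons by blast
  with 1 show ?case
    by (simp add: move_len_def)
qed auto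

lemma timed_plan_trajectory:
  fixes start :: real
  assumes "linear f" "\<And>C D. l1 (f D - f C) \<le> move_len C D" "cs \<noteq> []"
  defines "wl \<equiv> timed_plan start cs"
  shows "trajectory (fst (hd wl)) (fst (last wl)) (\<lambda>t. f (pl_interp wl t)) \<and>
    path_len (fst (hd wl)) (fst (last wl)) (\<lambda>t. f (pl_interp wl t)) \<le> pl_length (map (apsnd f) wl)"
proof -
  let ?wl = "map (apsnd f) wl"
  have "wl \<noteq> []"
    using map_snd_timed_plan[of start cs] assms(3) by (auto simp: wl_def)
  have "(\<lambda>t. f (pl_interp wl t)) = pl_interp ?wl"
    using pl_interp_linear[OF assms(1)] by blast
  moreover have "sorted_wrt (<) (map fst ?wl)" "unit_speed ?wl" "?wl \<noteq> []"
    using timed_plan_sorted timed_plan_unit_speed[OF assms(2)] \<open>wl \<noteq> []\<close>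
    by (simp_all add: wl_def comp_def)
  moreover have "fst (hd ?wl) = fst (hd wl)" "fst (last ?wl) = fst (last wl)"
    using \<open>wl \<noteq> []\<close> by (simp_all add: hd_map last_map)
  ultimately show ?thesis
    using pl_interp_trajectory[of ?wl] by simp
qed

lemma timed_plan_schedule:
  fixes start :: real
  assumes "cs \<noteq> []" "config2 (hd cs)" "chain_segments cs \<subseteq> Collect config2"
  defines "wl \<equiv> timed_plan start cs"
  shows "wl \<noteq> [] \<and> sorted_wrt (<) (map fst wl) \<and>
    feasible_schedule2 (hd cs) (last cs) (fst (hd wl)) (fst (last wl))
      (\<lambda>t. fst (pl_interp wl t)) (\<lambda>t. snd (pl_interp wl t)) \<and>
    total_len2 (fst (hd wl)) (fst (last wl)) (\<lambda>t. fst (pl_interp wl t)) (\<lambda>t. snd (pl_interp wl t))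
      \<le> plan_len cs"
proof -
  let ?t0 = "fst (hd wl)" and ?t1 = "fst (last wl)"
  have snds: "map snd wl = cs"
    unfolding wl_def by (rule map_snd_timed_plan)
  then have ne: "wl \<noteq> []"
    using assms(1) by auto
  have sorted: "sorted_wrt (<) (map fst wl)"
    unfolding wl_def by (rule timed_plan_sorted)
  have "l1 (fst D - fst C) \<le> move_len C D" "l1 (snd D - snd C) \<le> move_len C D" for C D :: "pt \<times> pt"
    using l1_nonneg[of "fst D - fst C"] l1_nonneg[of "snd D - snd C"] by (simp_all add: move_len_def)
  then have robots: "trajectory ?t0 ?t1 (\<lambda>t. fst (pl_interp wl t))"
      "path_len ?t0 ?t1 (\<lambda>t. fst (pl_interp wl t)) \<le> pl_length (map (apsnd fst) wl)"
      "trajectory ?t0 ?t1 (\<lambda>t. snd (pl_interp wl t))"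
      "path_len ?t0 ?t1 (\<lambda>t. snd (pl_interp wl t)) \<le> pl_length (map (apsnd snd) wl)"
    using timed_plan_trajectory[OF linear_fst _ assms(1)] timed_plan_trajectory[OF linear_snd _ assms(1)]
    unfolding wl_def by blast+
  have "pl_interp wl ` {?t0..?t1} \<subseteq> Collect config2"
    using pl_interp_image[OF sorted ne] assms(2,3) ne snds by (auto simp: hd_map[symmetric])
  then have "\<forall>t\<in>{?t0..?t1}. config2 (fst (pl_interp wl t), snd (pl_interp wl t))"
    by auto
  moreover have "pl_interp wl ?t0 = hd cs" "pl_interp wl ?t1 = last cs"
    using pl_interp_start[OF sorted ne] pl_interp_last[OF sorted ne] snds ne
    by (auto simp: hd_map[symmetric] last_map[symmetric])
  moreover have "total_len2 ?t0 ?t1 (\<lambda>t. fst (pl_interp wl t)) (\<lambda>t. snd (pl_interp wl t)) \<le> plan_len cs"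
    using robots(2,4) timed_plan_pl_length[of start cs] by (simp add: total_len2_def wl_def)
  ultimately show ?thesis
    using ne sorted robots(1,3) by (simp add: feasible_schedule2_def)
qed

section \<open>Axis gaps and one-axis detours\<close>

definition xc :: "pt \<times> pt \<Rightarrow> real \<times> real" where
  "xc C = (fst (fst C), fst (snd C))"

definition yc :: "pt \<times> pt \<Rightarrow> real \<times> real" where
  "yc C = (snd (fst C), snd (snd C))"

definition config_of :: "real \<times> real \<Rightarrow> real \<times> real \<Rightarrow> pt \<times> pt" where
  "config_of x y = ((fst x, fst y), (snd x, snd y))"

definition gap :: "real \<times> real \<Rightarrow> real" where
  "gap p = fst p - snd p"

lemma xc_config_of [simp]: "xc (config_of x y) = x"
  and yc_config_of [simp]: "yc (config_of x y) = y"
  by (simp_all add: xc_def yc_def config_of_def)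

lemma config2_iff_gap: "config2 C \<longleftrightarrow> 1 \<le> \<bar>gap (xc C)\<bar> \<or> 1 \<le> \<bar>gap (yc C)\<bar>"
  by (simp add: config2_def linf_def gap_def xc_def yc_def le_max_iff_disj)

lemma move_len_eq: "move_len C D = l1 (xc D - xc C) + l1 (yc D - yc C)"
  by (simp add: move_len_def l1_def xc_def yc_def)

lemma linear_gap_xc: "linear (\<lambda>C. gap (xc C))"
  and linear_gap_yc: "linear (\<lambda>C. gap (yc C))"
  by (auto intro!: linearI simp: gap_def xc_def yc_def algebra_simps)

lemma gap_swap: "gap (prod.swap p) = - gap p"
  by (simp add: gap_def)

definition same_side :: "real \<Rightarrow> real \<Rightarrow> bool" where
  "same_side a b \<longleftrightarrow> (1 \<le> a \<and> 1 \<le> b) \<or> (a \<le> -1 \<and> b \<le> -1)"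

lemma same_side_refl: "1 \<le> \<bar>a\<bar> \<Longrightarrow> same_side a a"
  by (auto simp: same_side_def)

lemma same_side_abs: "same_side a b \<Longrightarrow> 1 \<le> \<bar>a\<bar>"
  by (auto simp: same_side_def)

lemma same_side_closed_segment:
  fixes g :: "'v::real_vector \<Rightarrow> real"
  assumes "linear g" "same_side (g C) (g D)" "E \<in> closed_segment C D"
  shows "1 \<le> \<bar>g E\<bar>"
proof -
  obtain u where u: "0 \<le> u" "u \<le> 1" "E = (1 - u) *\<^sub>R C + u *\<^sub>R D"
    using assms(3) unfolding closed_segment_def by blast
  have "g E = (1 - u) * g C + u * g D"
    using u(3) by (simp add: linear_add[OF assms(1)] linear_scale[OF assms(1)])
  moreover have "(1 - u) * a + u * b \<ge> 1" if "1 \<le> a" "1 \<le> b" for a b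
    using mult_left_mono[of 1 a "1 - u"] mult_left_mono[of 1 b u] u that by simp
  moreover have "(1 - u) * a + u * b \<le> -1" if "a \<le> -1" "b \<le> -1" for a b
    using mult_left_mono[of a "-1" "1 - u"] mult_left_mono[of b "-1" u] u that by simp
  ultimately show ?thesis
    using assms(2) unfolding same_side_def by fastforce
qed

lemma segment_feasible_x:
  "same_side (gap (xc C)) (gap (xc D)) \<Longrightarrow> closed_segment C D \<subseteq> Collect config2"
  using same_side_closed_segment[OF linear_gap_xc, of C D] unfolding config2_iff_gap by blast

lemma segment_feasible_y:
  "same_side (gap (yc C)) (gap (yc D)) \<Longrightarrow> closed_segment C D \<subseteq> Collect config2"
  using same_side_closed_segment[OF linear_gap_yc, of C D] unfolding config2_iff_gap by blast

text \<open>Two robots on a line move from \<open>a\<close> to \<open>b\<close> and must at some moment be at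
  distance at least 1. In the cheapest way, one robot parks at the inner end of its
  range while the other goes \<open>overshoot\<close> beyond the outer end of its own range and back.\<close>
definition overshoot :: "real \<times> real \<Rightarrow> real \<times> real \<Rightarrow> real" where
  "overshoot a b = max 0 (1 - (max (fst a) (fst b) - min (snd a) (snd b)))"

definition overshoot_point :: "real \<times> real \<Rightarrow> real \<times> real \<Rightarrow> real \<times> real" where
  "overshoot_point a b = (max (fst a) (fst b) + overshoot a b, min (snd a) (snd b))"

definition detour_cost :: "real \<times> real \<Rightarrow> real \<times> real \<Rightarrow> real" where
  "detour_cost a b = l1 (b - a) + 2 * min (overshoot a b) (overshoot (prod.swap a) (prod.swap b))"

definition detour_point :: "real \<times> real \<Rightarrow> real \<times> real \<Rightarrow> real \<times> real" where
  "detour_point a b =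
    (if overshoot a b \<le> overshoot (prod.swap a) (prod.swap b) then overshoot_point a b
     else prod.swap (overshoot_point (prod.swap a) (prod.swap b)))"

lemma detour_cost_swap: "detour_cost (prod.swap a) (prod.swap b) = detour_cost a b"
  by (simp add: detour_cost_def l1_swap_diff min.commute)

lemma overshoot_point_gap: "1 \<le> gap (overshoot_point a b)"
  by (simp add: overshoot_point_def overshoot_def gap_def)

lemma overshoot_point_cost:
  "l1 (overshoot_point a b - a) + l1 (b - overshoot_point a b) = l1 (b - a) + 2 * overshoot a b"
  by (simp add: overshoot_point_def overshoot_def l1_def max_def min_def abs_if)

lemma detour_point_gap: "1 \<le> \<bar>gap (detour_point a b)\<bar>"
  using overshoot_point_gap[of a b] overshoot_point_gap[of "prod.swap a" "prod.swap b"]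
  by (simp add: detour_point_def gap_swap)

lemma detour_point_cost:
  "l1 (detour_point a b - a) + l1 (b - detour_point a b) = detour_cost a b"
proof (cases "overshoot a b \<le> overshoot (prod.swap a) (prod.swap b)")
  case True
  then show ?thesis
    by (simp add: detour_point_def detour_cost_def overshoot_point_cost)
next
  case False
  then have "l1 (detour_point a b - a) + l1 (b - detour_point a b) =
      l1 (prod.swap b - prod.swap a) + 2 * overshoot (prod.swap a) (prod.swap b)"
    using False overshoot_point_cost[of "prod.swap a" "prod.swap b"]
    by (simp add: detour_point_def l1_swap_diff_left l1_minus_commute[of b])
  also have "\<dots> = detour_cost a b"
    using False detour_cost_swap[of a b] by (simp add: detour_cost_def)
  finally show ?thesis .
qed

lemma overshoot_nonneg: "0 \<le> overshoot a b"
  by (simp add: overshoot_def)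

lemma overshoot_eq_0: "1 \<le> gap a \<Longrightarrow> overshoot a b = 0"
  unfolding overshoot_def gap_def
  by (intro max_absorb1) (simp add: le_max_iff_disj min_le_iff_disj)

lemma max0_le_add:
  fixes x y z :: real
  shows "x \<le> y + z \<Longrightarrow> max 0 x \<le> max 0 y + max 0 z"
  by (simp add: max_def)

lemma via_ge_overshoot:
  fixes a b g :: real
  shows "\<bar>b - a\<bar> + 2 * max 0 (g - max a b) \<le> \<bar>g - a\<bar> + \<bar>b - g\<bar>"
    and "\<bar>b - a\<bar> + 2 * max 0 (min a b - g) \<le> \<bar>g - a\<bar> + \<bar>b - g\<bar>"
  by (simp_all add: max_def min_def abs_if)

lemma detour_cost_le_via:
  assumes "1 \<le> \<bar>gap g\<bar>"
  shows "detour_cost a b \<le> l1 (g - a) + l1 (b - g)"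
proof -
  have *: "detour_cost a b \<le> l1 (g - a) + l1 (b - g)" if "1 \<le> gap g" for a b g
  proof -
    have "\<bar>fst b - fst a\<bar> + 2 * max 0 (fst g - max (fst a) (fst b))
        \<le> \<bar>fst g - fst a\<bar> + \<bar>fst b - fst g\<bar>"
      "\<bar>snd b - snd a\<bar> + 2 * max 0 (min (snd a) (snd b) - snd g)
        \<le> \<bar>snd g - snd a\<bar> + \<bar>snd b - snd g\<bar>"
      by (rule via_ge_overshoot)+
    moreover have "overshoot a b \<le> max 0 (fst g - max (fst a) (fst b)) + max 0 (min (snd a) (snd b) - snd g)"
      using that unfolding overshoot_def gap_def by (intro max0_le_add) linarith
    moreover have "min (overshoot a b) (overshoot (prod.swap a) (prod.swap b)) \<le> overshoot a b"
      by (rule min.cobounded1)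
    ultimately show ?thesis
      unfolding detour_cost_def l1_def fst_diff snd_diff by linarith
  qed
  show ?thesis
  proof (cases "1 \<le> gap g")
    case False
    then have "1 \<le> gap (prod.swap g)"
      using assms by (simp add: gap_swap)
    then have "detour_cost (prod.swap a) (prod.swap b) \<le> l1 (prod.swap g - prod.swap a) + l1 (prod.swap b - prod.swap g)"
      by (rule *)
    then show ?thesis
      by (simp add: detour_cost_swap l1_swap_diff)
  qed (rule *)
qed

lemma detour_cost_le_via2:
  assumes "1 \<le> \<bar>gap g\<bar> \<or> 1 \<le> \<bar>gap h\<bar>"
  shows "detour_cost a b \<le> l1 (g - a) + l1 (h - g) + l1 (b - h)"
  using assms
proof
  assume "1 \<le> \<bar>gap g\<bar>"
  then show ?thesis
    using detour_cost_le_via[of g a b] l1_diff_le[of b g h] by linarith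
next
  assume "1 \<le> \<bar>gap h\<bar>"
  then show ?thesis
    using detour_cost_le_via[of h a b] l1_diff_le[of h a g] by linarith
qed

lemma detour_cost_eq_l1:
  assumes "1 \<le> \<bar>gap a\<bar>"
  shows "detour_cost a b = l1 (b - a)"
proof -
  have "overshoot a b = 0 \<or> overshoot (prod.swap a) (prod.swap b) = 0"
    using assms overshoot_eq_0[of a b] overshoot_eq_0[of "prod.swap a" "prod.swap b"]
    by (auto simp: gap_swap abs_if split: if_splits)
  then show ?thesis
    using overshoot_nonneg[of a b] overshoot_nonneg[of "prod.swap a" "prod.swap b"]
    by (auto simp: detour_cost_def)
qed

section \<open>Lower bounds\<close>

lemma not_same_side_crossing:
  fixes f :: "real \<Rightarrow> real"
  assumes "continuous_on {a..b} f" "a \<le> b" "\<not> same_side (f a) (f b)"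
  shows "\<exists>t\<in>{a..b}. \<bar>f t\<bar> < 1"
proof (rule ccontr)
  assume far: "\<not> (\<exists>t\<in>{a..b}. \<bar>f t\<bar> < 1)"
  moreover have "a \<in> {a..b}" "b \<in> {a..b}"
    using assms(2) by auto
  ultimately have "1 \<le> \<bar>f a\<bar>" "1 \<le> \<bar>f b\<bar>"
    using not_less by blast+
  then have "f a \<le> 0 \<and> 0 \<le> f b \<or> f b \<le> 0 \<and> 0 \<le> f a"
    using assms(3) by (auto simp: same_side_def)
  then obtain t where "t \<in> {a..b}" "f t = 0"
    using IVT'[of f a 0 b] IVT2'[of f b 0 a] assms(1,2) by force
  then show False
    using far by (metis abs_zero zero_less_one)
qed

lemma move_len_le_total_len:
  assumes "feasible_schedule2 A B t0 t1 m1 m2" "t0 \<le> p" "p \<le> q" "q \<le> t1"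
  shows "move_len A (m1 p, m2 p) + move_len (m1 p, m2 p) (m1 q, m2 q) + move_len (m1 q, m2 q) B
    \<le> total_len2 t0 t1 m1 m2"
proof -
  have "trajectory t0 t1 m1" "trajectory t0 t1 m2"
    and ends: "m1 t0 = fst A" "m2 t0 = snd A" "m1 t1 = fst B" "m2 t1 = snd B"
    using assms(1) by (simp_all add: feasible_schedule2_def)
  then show ?thesis
    using three_steps_le_path_len[of t0 t1 m1 p q] three_steps_le_path_len[of t0 t1 m2 p q] assms(2-4)
    by (simp add: move_len_def total_len2_def)
qed

lemma detour_cost_le_total_len:
  assumes F: "feasible_schedule2 A B t0 t1 m1 m2"
    and x: "\<not> same_side (gap (xc A)) (gap (xc B))" and y: "\<not> same_side (gap (yc A)) (gap (yc B))"
  shows "detour_cost (xc A) (xc B) + detour_cost (yc A) (yc B) \<le> total_len2 t0 t1 m1 m2"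
proof -
  define M where "M t = (m1 t, m2 t)" for t
  have T: "trajectory t0 t1 m1" "trajectory t0 t1 m2"
    and feasible: "\<And>t. t \<in> {t0..t1} \<Longrightarrow> config2 (M t)"
    and ends: "M t0 = A" "M t1 = B"
    using F by (auto simp: feasible_schedule2_def M_def)
  have "t0 \<le> t1"
    using T(1) by (simp add: trajectory_def)
  have "continuous_on {t0..t1} (\<lambda>t. gap (xc (M t)))" "continuous_on {t0..t1} (\<lambda>t. gap (yc (M t)))"
    unfolding M_def gap_def xc_def yc_def
    using trajectory_continuous_on[OF T(1)] trajectory_continuous_on[OF T(2)]
    by (auto intro!: continuous_intros)
  then obtain a b where ab: "a \<in> {t0..t1}" "b \<in> {t0..t1}"
    and "\<bar>gap (xc (M a))\<bar> < 1" "\<bar>gap (yc (M b))\<bar> < 1"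
    using not_same_side_crossing[OF _ \<open>t0 \<le> t1\<close>] x y ends by metis
  then have sep: "1 \<le> \<bar>gap (yc (M a))\<bar>" "1 \<le> \<bar>gap (xc (M b))\<bar>"
    using feasible[of a] feasible[of b] ab by (auto simp: config2_iff_gap)
  define p q where "p = min a b" and "q = max a b"
  have "detour_cost (xc A) (xc B) \<le> l1 (xc (M p) - xc A) + l1 (xc (M q) - xc (M p)) + l1 (xc B - xc (M q))"
    using sep(2) by (intro detour_cost_le_via2) (auto simp: p_def q_def min_def max_def)
  moreover have "detour_cost (yc A) (yc B) \<le> l1 (yc (M p) - yc A) + l1 (yc (M q) - yc (M p)) + l1 (yc B - yc (M q))"
    using sep(1) by (intro detour_cost_le_via2) (auto simp: p_def q_def min_def max_def)
  moreover have "move_len A (M p) + move_len (M p) (M q) + move_len (M q) B \<le> total_len2 t0 t1 m1 m2"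
    using move_len_le_total_len[OF F, of p q] ab by (simp add: M_def p_def q_def)
  ultimately show ?thesis
    by (simp add: move_len_eq)
qed

section \<open>The optimal plan\<close>

text \<open>The robots may first move along the \<open>y\<close>-axis, kept apart by their
  \<open>x\<close>-gap in \<open>A\<close>, and then along the \<open>x\<close>-axis, kept apart by their \<open>y\<close>-gap in
  \<open>B\<close> or by an \<open>x\<close>-gap that keeps its sign.\<close>
definition y_first_ok :: "pt \<times> pt \<Rightarrow> pt \<times> pt \<Rightarrow> bool" where
  "y_first_ok A B \<longleftrightarrow> 1 \<le> \<bar>gap (xc A)\<bar> \<and>
     (1 \<le> \<bar>gap (yc B)\<bar> \<or> same_side (gap (xc A)) (gap (xc B)))"

definition x_first_ok :: "pt \<times> pt \<Rightarrow> pt \<times> pt \<Rightarrow> bool" where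
  "x_first_ok A B \<longleftrightarrow> 1 \<le> \<bar>gap (yc A)\<bar> \<and>
     (1 \<le> \<bar>gap (xc B)\<bar> \<or> same_side (gap (yc A)) (gap (yc B)))"

definition opt_cost :: "pt \<times> pt \<Rightarrow> pt \<times> pt \<Rightarrow> real" where
  "opt_cost A B = (if y_first_ok A B \<or> x_first_ok A B then move_len A B
     else detour_cost (xc A) (xc B) + detour_cost (yc A) (yc B))"

definition opt_via :: "pt \<times> pt \<Rightarrow> pt \<times> pt \<Rightarrow> (pt \<times> pt) \<times> (pt \<times> pt)" where
  "opt_via A B =
    (if y_first_ok A B then (config_of (xc A) (yc B), B)
     else if x_first_ok A B then (config_of (xc B) (yc A), B)
     else if 1 \<le> \<bar>gap (xc A)\<bar> then
       (let h = detour_point (yc A) (yc B) in (config_of (xc A) h, config_of (xc B) h))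
     else
       (let g = detour_point (xc A) (xc B) in (config_of g (yc A), config_of g (yc B))))"

definition opt_plan :: "pt \<times> pt \<Rightarrow> pt \<times> pt \<Rightarrow> (pt \<times> pt) list" where
  "opt_plan A B = [A, fst (opt_via A B), snd (opt_via A B), B]"

lemma opt_cost_le_total_len:
  assumes F: "feasible_schedule2 A B t0 t1 m1 m2"
  shows "opt_cost A B \<le> total_len2 t0 t1 m1 m2"
proof (cases "y_first_ok A B \<or> x_first_ok A B")
  case True
  have "t0 \<le> t1" "m1 t0 = fst A" "m2 t0 = snd A"
    using F by (simp_all add: feasible_schedule2_def trajectory_def)
  then have "move_len A B \<le> total_len2 t0 t1 m1 m2"
    using move_len_le_total_len[OF F, of t0 t0] by (simp add: move_len_def l1_def)
  with True show ?thesis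
    by (simp add: opt_cost_def)
next
  case False
  then have "\<not> same_side (gap (xc A)) (gap (xc B))" "\<not> same_side (gap (yc A)) (gap (yc B))"
    using same_side_abs by (auto simp: y_first_ok_def x_first_ok_def)
  with False show ?thesis
    using detour_cost_le_total_len[OF F] by (simp add: opt_cost_def)
qed

lemma y_first_plan:
  assumes "y_first_ok A B" "config2 B"
  defines "C \<equiv> config_of (xc A) (yc B)"
  shows "chain_segments [A, C, B, B] \<subseteq> Collect config2 \<and> plan_len [A, C, B, B] = move_len A B"
proof -
  have "closed_segment A C \<subseteq> Collect config2"
    using assms(1) by (intro segment_feasible_x) (simp add: C_def y_first_ok_def same_side_refl)
  moreover have "closed_segment C B \<subseteq> Collect config2"
    using assms(1) unfolding y_first_ok_def
  proof (elim conjE disjE)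
    assume "1 \<le> \<bar>gap (yc B)\<bar>"
    then show ?thesis
      unfolding C_def by (intro segment_feasible_y) (simp add: same_side_refl)
  qed (simp add: C_def segment_feasible_x)
  ultimately show ?thesis
    using assms(2) by (simp add: C_def move_len_eq l1_def)
qed

lemma x_first_plan:
  assumes "x_first_ok A B" "config2 B"
  defines "C \<equiv> config_of (xc B) (yc A)"
  shows "chain_segments [A, C, B, B] \<subseteq> Collect config2 \<and> plan_len [A, C, B, B] = move_len A B"
proof -
  have "closed_segment A C \<subseteq> Collect config2"
    using assms(1) by (intro segment_feasible_y) (simp add: C_def x_first_ok_def same_side_refl)
  moreover have "closed_segment C B \<subseteq> Collect config2"
    using assms(1) unfolding x_first_ok_def
  proof (elim conjE disjE)
    assume "1 \<le> \<bar>gap (xc B)\<bar>"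
    then show ?thesis
      unfolding C_def by (intro segment_feasible_x) (simp add: same_side_refl)
  qed (simp add: C_def segment_feasible_y)
  ultimately show ?thesis
    using assms(2) by (simp add: C_def move_len_eq l1_def)
qed

lemma detour_y_plan:
  assumes "1 \<le> \<bar>gap (xc A)\<bar>" "1 \<le> \<bar>gap (xc B)\<bar>"
  defines "h \<equiv> detour_point (yc A) (yc B)"
  defines "cs \<equiv> [A, config_of (xc A) h, config_of (xc B) h, B]"
  shows "chain_segments cs \<subseteq> Collect config2 \<and>
    plan_len cs = detour_cost (xc A) (xc B) + detour_cost (yc A) (yc B)"
  using assms detour_point_gap[of "yc A" "yc B"] detour_point_cost[of "yc A" "yc B"]
    detour_cost_eq_l1[of "xc A" "xc B"] segment_feasible_x[of A "config_of (xc A) h"]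
    segment_feasible_y[of "config_of (xc A) h" "config_of (xc B) h"]
    segment_feasible_x[of "config_of (xc B) h" B]
  by (simp add: same_side_refl move_len_eq l1_def)

lemma detour_x_plan:
  assumes "1 \<le> \<bar>gap (yc A)\<bar>" "1 \<le> \<bar>gap (yc B)\<bar>"
  defines "g \<equiv> detour_point (xc A) (xc B)"
  defines "cs \<equiv> [A, config_of g (yc A), config_of g (yc B), B]"
  shows "chain_segments cs \<subseteq> Collect config2 \<and>
    plan_len cs = detour_cost (xc A) (xc B) + detour_cost (yc A) (yc B)"
  using assms detour_point_gap[of "xc A" "xc B"] detour_point_cost[of "xc A" "xc B"]
    detour_cost_eq_l1[of "yc A" "yc B"] segment_feasible_y[of A "config_of g (yc A)"]
    segment_feasible_x[of "config_of g (yc A)" "config_of g (yc B)"]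
    segment_feasible_y[of "config_of g (yc B)" B]
  by (simp add: same_side_refl move_len_eq l1_def)

lemma opt_plan_feasible:
  assumes A: "config2 A" and B: "config2 B"
  shows "chain_segments (opt_plan A B) \<subseteq> Collect config2 \<and> plan_len (opt_plan A B) = opt_cost A B"
proof -
  consider (y_first) "y_first_ok A B" | (x_first) "\<not> y_first_ok A B" "x_first_ok A B"
    | (detour_y) "\<not> y_first_ok A B" "\<not> x_first_ok A B" "1 \<le> \<bar>gap (xc A)\<bar>"
    | (detour_x) "\<not> y_first_ok A B" "\<not> x_first_ok A B" "\<not> 1 \<le> \<bar>gap (xc A)\<bar>"
    by blast
  then show ?thesis
  proof cases
    case y_first
    then show ?thesis
      using y_first_plan[OF _ B] by (simp add: opt_plan_def opt_via_def opt_cost_def)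
  next
    case x_first
    then show ?thesis
      using x_first_plan[OF _ B] by (simp add: opt_plan_def opt_via_def opt_cost_def)
  next
    case detour_y
    then have "1 \<le> \<bar>gap (xc B)\<bar>"
      using B by (auto simp: y_first_ok_def config2_iff_gap)
    then show ?thesis
      using detour_y detour_y_plan[of A B] by (simp add: opt_plan_def opt_via_def opt_cost_def Let_def)
  next
    case detour_x
    then have "1 \<le> \<bar>gap (yc A)\<bar>" "1 \<le> \<bar>gap (yc B)\<bar>"
      using A B by (auto simp: x_first_ok_def config2_iff_gap)
    then show ?thesis
      using detour_x detour_x_plan[of A B] by (simp add: opt_plan_def opt_via_def opt_cost_def Let_def)
  qed
qed

lemma opt_schedule:
  assumes "config2 A" "config2 B"
  defines "wl \<equiv> timed_plan 0 (opt_plan A B)"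
  shows "wl \<noteq> [] \<and> sorted_wrt (<) (map fst wl) \<and>
    feasible_schedule2 A B (fst (hd wl)) (fst (last wl))
      (\<lambda>t. fst (pl_interp wl t)) (\<lambda>t. snd (pl_interp wl t)) \<and>
    total_len2 (fst (hd wl)) (fst (last wl)) (\<lambda>t. fst (pl_interp wl t)) (\<lambda>t. snd (pl_interp wl t))
      = opt_cost A B"
proof -
  have "chain_segments (opt_plan A B) \<subseteq> Collect config2" "plan_len (opt_plan A B) = opt_cost A B"
    using opt_plan_feasible[OF assms(1,2)] by auto
  then have "wl \<noteq> [] \<and> sorted_wrt (<) (map fst wl) \<and>
    feasible_schedule2 A B (fst (hd wl)) (fst (last wl))
      (\<lambda>t. fst (pl_interp wl t)) (\<lambda>t. snd (pl_interp wl t)) \<and>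
    total_len2 (fst (hd wl)) (fst (last wl)) (\<lambda>t. fst (pl_interp wl t)) (\<lambda>t. snd (pl_interp wl t))
      \<le> opt_cost A B"
    using timed_plan_schedule[of "opt_plan A B" 0] assms(1) by (simp add: wl_def opt_plan_def)
  then show ?thesis
    using opt_cost_le_total_len by (meson antisym)
qed

lemma minsum_opt2_eq_opt_cost:
  assumes "config2 A" "config2 B"
  shows "minsum_opt2 A B = opt_cost A B"
  unfolding minsum_opt2_def
proof (rule cInf_eq_minimum)
  show "opt_cost A B \<in> {total_len2 t0 t1 m1 m2 |t0 t1 m1 m2. feasible_schedule2 A B t0 t1 m1 m2}"
    using opt_schedule[OF assms] by (metis (mono_tags, lifting) mem_Collect_eq)
qed (auto intro: opt_cost_le_total_len)

section \<open>Straight-line real-RAM programs\<close>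

definition ram_computable :: "(real list \<Rightarrow> real) \<Rightarrow> bool" where
  "ram_computable f \<longleftrightarrow> (\<exists>e. \<forall>xs. reval xs e = f xs)"

text \<open>The only branching construct is \<open>IfLe\<close>, so a test counts as decidable when branching
  on it preserves computability.\<close>
definition ram_decidable :: "(real list \<Rightarrow> bool) \<Rightarrow> bool" where
  "ram_decidable P \<longleftrightarrow> (\<forall>f g. ram_computable f \<longrightarrow> ram_computable g \<longrightarrow>
     ram_computable (\<lambda>xs. if P xs then f xs else g xs))"

lemma ram_computable_eqI: "ram_computable g \<Longrightarrow> (\<And>xs. g xs = f xs) \<Longrightarrow> ram_computable f"
  unfolding ram_computable_def by simp

lemma ram_computable_iff:
  "ram_computable f \<longleftrightarrow> (\<exists>e. f = (\<lambda>xs. reval xs e))"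
  unfolding ram_computable_def by (simp add: fun_eq_iff eq_commute)

lemma ram_computable_input: "ram_computable (\<lambda>xs. xs ! i)"
  unfolding ram_computable_def by (rule exI[of _ "Inp i"]) simp

lemma ram_computable_of_int: "ram_computable (\<lambda>_. of_int c)"
  unfolding ram_computable_def by (rule exI[of _ "Cst c"]) simp

lemma ram_computable_0: "ram_computable (\<lambda>_. 0)"
  and ram_computable_1: "ram_computable (\<lambda>_. 1)"
  and ram_computable_numeral: "ram_computable (\<lambda>_. numeral n)"
  using ram_computable_of_int[of 0] ram_computable_of_int[of 1] ram_computable_of_int[of "numeral n"]
  by simp_all

lemma ram_computable_add:
  assumes "ram_computable f" "ram_computable g" shows "ram_computable (\<lambda>xs. f xs + g xs)"
proof -
  obtain a b where "f = (\<lambda>xs. reval xs a)" "g = (\<lambda>xs. reval xs b)"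
    using assms unfolding ram_computable_iff by blast
  then show ?thesis unfolding ram_computable_iff by (intro exI[of _ "Add a b"]) simp
qed

lemma ram_computable_diff:
  assumes "ram_computable f" "ram_computable g" shows "ram_computable (\<lambda>xs. f xs - g xs)"
proof -
  obtain a b where "f = (\<lambda>xs. reval xs a)" "g = (\<lambda>xs. reval xs b)"
    using assms unfolding ram_computable_iff by blast
  then show ?thesis unfolding ram_computable_iff by (intro exI[of _ "Sub a b"]) simp
qed

lemma ram_computable_mult:
  assumes "ram_computable f" "ram_computable g" shows "ram_computable (\<lambda>xs. f xs * g xs)"
proof -
  obtain a b where "f = (\<lambda>xs. reval xs a)" "g = (\<lambda>xs. reval xs b)"
    using assms unfolding ram_computable_iff by blast
  then show ?thesis unfolding ram_computable_iff by (intro exI[of _ "Mul a b"]) simp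
qed

lemma ram_computable_if:
  "ram_decidable P \<Longrightarrow> ram_computable f \<Longrightarrow> ram_computable g \<Longrightarrow>
   ram_computable (\<lambda>xs. if P xs then f xs else g xs)"
  unfolding ram_decidable_def by blast

lemma ram_decidable_le:
  assumes "ram_computable f" "ram_computable g" shows "ram_decidable (\<lambda>xs. f xs \<le> g xs)"
  unfolding ram_decidable_def
proof (intro allI impI)
  fix h k assume "ram_computable h" "ram_computable k"
  with assms obtain a b c d where evals: "f = (\<lambda>xs. reval xs a)" "g = (\<lambda>xs. reval xs b)"
    "h = (\<lambda>xs. reval xs c)" "k = (\<lambda>xs. reval xs d)"
    unfolding ram_computable_iff by blast
  then have "(\<lambda>xs. if f xs \<le> g xs then h xs else k xs) = (\<lambda>xs. reval xs (IfLe a b c d))"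
    unfolding evals by simp
  then show "ram_computable (\<lambda>xs. if f xs \<le> g xs then h xs else k xs)"
    unfolding ram_computable_iff by blast
qed

lemma ram_decidable_conj:
  assumes "ram_decidable P" "ram_decidable Q" shows "ram_decidable (\<lambda>xs. P xs \<and> Q xs)"
  unfolding ram_decidable_def
proof (intro allI impI)
  fix f g assume fg: "ram_computable f" "ram_computable g"
  have "ram_computable (\<lambda>xs. if P xs then if Q xs then f xs else g xs else g xs)"
    by (intro ram_computable_if assms fg)
  then show "ram_computable (\<lambda>xs. if P xs \<and> Q xs then f xs else g xs)"
    by (rule ram_computable_eqI) simp
qed

lemma ram_decidable_disj:
  assumes "ram_decidable P" "ram_decidable Q" shows "ram_decidable (\<lambda>xs. P xs \<or> Q xs)"
  unfolding ram_decidable_def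
proof (intro allI impI)
  fix f g assume fg: "ram_computable f" "ram_computable g"
  have "ram_computable (\<lambda>xs. if P xs then f xs else if Q xs then f xs else g xs)"
    by (intro ram_computable_if assms fg)
  then show "ram_computable (\<lambda>xs. if P xs \<or> Q xs then f xs else g xs)"
    by (rule ram_computable_eqI) simp
qed

lemma ram_computable_abs: "ram_computable f \<Longrightarrow> ram_computable (\<lambda>xs. \<bar>f xs\<bar>)"
proof -
  assume "ram_computable f"
  then have "ram_computable (\<lambda>xs. if 0 \<le> f xs then f xs else 0 - f xs)"
    by (intro ram_computable_if ram_decidable_le ram_computable_diff ram_computable_0)
  then show ?thesis by (rule ram_computable_eqI) simp
qed

lemma ram_computable_max:
  "ram_computable f \<Longrightarrow> ram_computable g \<Longrightarrow> ram_computable (\<lambda>xs. max (f xs) (g xs))"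
  unfolding max_def by (intro ram_computable_if ram_decidable_le)

lemma ram_computable_min:
  "ram_computable f \<Longrightarrow> ram_computable g \<Longrightarrow> ram_computable (\<lambda>xs. min (f xs) (g xs))"
  unfolding min_def by (intro ram_computable_if ram_decidable_le)

lemma ram_computable_minus: "ram_computable f \<Longrightarrow> ram_computable (\<lambda>xs. - f xs)"
  using ram_computable_diff[OF ram_computable_0] by simp

lemmas ram_computable_intros = ram_computable_input ram_computable_0 ram_computable_1
  ram_computable_numeral ram_computable_add ram_computable_diff ram_computable_minus
  ram_computable_mult ram_computable_if ram_computable_abs ram_computable_max ram_computable_min
  ram_decidable_le ram_decidable_conj ram_decidable_disj

definition input_start :: "real list \<Rightarrow> pt \<times> pt" where
  "input_start xs = ((xs ! 0, xs ! 1), (xs ! 2, xs ! 3))"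

definition input_target :: "real list \<Rightarrow> pt \<times> pt" where
  "input_target xs = ((xs ! 4, xs ! 5), (xs ! 6, xs ! 7))"

lemma input_start_inst_input [simp]: "input_start (inst_input A B) = A"
  and input_target_inst_input [simp]: "input_target (inst_input A B) = B"
  by (simp_all add: input_start_def input_target_def inst_input_def)

lemma opt_cost_computable: "ram_computable (\<lambda>xs. opt_cost (input_start xs) (input_target xs))"
  unfolding opt_cost_def y_first_ok_def x_first_ok_def same_side_def detour_cost_def overshoot_def
    move_len_def l1_def gap_def xc_def yc_def input_start_def input_target_def
  by (simp only: prod.sel fst_diff snd_diff swap_simp) (intro ram_computable_intros)

definition ram_computable_config :: "(real list \<Rightarrow> pt \<times> pt) \<Rightarrow> bool" where
  "ram_computable_config F \<longleftrightarrow>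
     ram_computable (\<lambda>xs. fst (fst (F xs))) \<and> ram_computable (\<lambda>xs. snd (fst (F xs))) \<and>
     ram_computable (\<lambda>xs. fst (snd (F xs))) \<and> ram_computable (\<lambda>xs. snd (snd (F xs)))"

lemma run_waypoints_Cons:
  assumes "ram_computable t" "ram_computable_config F" "\<forall>xs. run_waypoints W xs = ws xs"
  shows "\<exists>W'. \<forall>xs. run_waypoints W' xs = (t xs, F xs) # ws xs"
proof -
  obtain a b c d e where "t = (\<lambda>xs. reval xs a)" "(\<lambda>xs. fst (fst (F xs))) = (\<lambda>xs. reval xs b)"
    "(\<lambda>xs. snd (fst (F xs))) = (\<lambda>xs. reval xs c)" "(\<lambda>xs. fst (snd (F xs))) = (\<lambda>xs. reval xs d)"
    "(\<lambda>xs. snd (snd (F xs))) = (\<lambda>xs. reval xs e)"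
    using assms(1,2) unfolding ram_computable_config_def ram_computable_iff by metis
  then have "run_waypoints ((a, b, c, d, e) # W) xs = (t xs, F xs) # ws xs" for xs
    using assms(3) by (simp add: run_waypoints_def fun_eq_iff prod_eq_iff)
  then show ?thesis
    by blast
qed

lemma timed_plan_computable:
  assumes "ram_computable t" "list_all ram_computable_config Fs"
  shows "\<exists>W. \<forall>xs. run_waypoints W xs = timed_plan (t xs) (map (\<lambda>F. F xs) Fs)"
  using assms
proof (induction Fs arbitrary: t rule: induct_list012)
  case 1
  show ?case
    by (rule exI[of _ "[]"]) (simp add: run_waypoints_def)
next
  case (2 F)
  have "\<forall>xs. run_waypoints [] xs = []"
    by (simp add: run_waypoints_def)
  then show ?case
    using run_waypoints_Cons[of t F "[]" "\<lambda>_. []"] 2 by simp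
next
  case (3 F G Fs)
  let ?t' = "\<lambda>xs. t xs + 1 + move_len (F xs) (G xs)"
  have "ram_computable ?t'"
    using "3.prems" unfolding ram_computable_config_def move_len_def l1_def
    by (simp only: fst_diff snd_diff list.pred_inject) (intro ram_computable_intros; blast)
  then obtain W where "\<forall>xs. run_waypoints W xs = timed_plan (?t' xs) (map (\<lambda>F. F xs) (G # Fs))"
    using "3.IH"(2) "3.prems"(2) by auto
  then show ?case
    using run_waypoints_Cons[of t F W] "3.prems" by simp
qed

lemma opt_plan_computable: "\<exists>W. \<forall>A B. run_waypoints W (inst_input A B) = timed_plan 0 (opt_plan A B)"
proof -
  have "list_all ram_computable_config
      [input_start, \<lambda>xs. fst (opt_via (input_start xs) (input_target xs)),
       \<lambda>xs. snd (opt_via (input_start xs) (input_target xs)), input_target]"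
    unfolding ram_computable_config_def opt_via_def y_first_ok_def x_first_ok_def same_side_def
      detour_point_def overshoot_point_def overshoot_def config_of_def gap_def xc_def yc_def
      input_start_def input_target_def Let_def
    by (simp only: list.pred_inject prod.sel swap_simp if_distrib[of fst] if_distrib[of snd])
      (intro conjI TrueI ram_computable_intros)
  then obtain W where W: "\<forall>xs. run_waypoints W xs = timed_plan 0
      (map (\<lambda>F. F xs) [input_start, \<lambda>xs. fst (opt_via (input_start xs) (input_target xs)),
       \<lambda>xs. snd (opt_via (input_start xs) (input_target xs)), input_target])"
    using timed_plan_computable[OF ram_computable_0] by blast
  have "run_waypoints W (inst_input A B) = timed_plan 0 (opt_plan A B)" for A B
    using W[rule_format, of "inst_input A B"]
    by (simp only: list.map input_start_inst_input input_target_inst_input opt_plan_def)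
  then show ?thesis
    by blast
qed

theorem theorem3p5:
  shows "\<exists>(P :: rexp) (W :: (rexp \<times> rexp \<times> rexp \<times> rexp \<times> rexp) list).
    \<forall>A B. config2 A \<and> config2 B \<longrightarrow>
      (let xs = inst_input A B;
           wl = run_waypoints W xs;
           t0 = fst (hd wl); t1 = fst (last wl);
           m1 = (\<lambda>t. fst (pl_interp wl t));
           m2 = (\<lambda>t. snd (pl_interp wl t))
       in reval xs P = minsum_opt2 A B \<and>
          wl \<noteq> [] \<and> sorted_wrt (<) (map fst wl) \<and>
          feasible_schedule2 A B t0 t1 m1 m2 \<and>
          total_len2 t0 t1 m1 m2 = minsum_opt2 A B)"
proof -
  obtain P where P: "\<And>A B. reval (inst_input A B) P = opt_cost A B"
    using opt_cost_computable unfolding ram_computable_def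
    by (metis input_start_inst_input input_target_inst_input)
  obtain W where W: "\<And>A B. run_waypoints W (inst_input A B) = timed_plan 0 (opt_plan A B)"
    using opt_plan_computable by blast
  show ?thesis
    using opt_schedule minsum_opt2_eq_opt_cost
    by (intro exI[of _ P] exI[of _ W] allI impI) (simp add: Let_def P W)
qed

end
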